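(* Let $\mathcal{M}$ be an unbounded graph matroid family and let $G$ be an $\mathcal{M}$-reconstructible graph with at least two edges. Then $\mathcal{M}(G)$ is bridgeless (i.e., has no coloops).
   Context: All graphs are finite and simple and have no isolated vertices. A graph matroid family $\mathcal{M}$ assigns to every graph $G$ a matroid $\mathcal{M}(G)$ on $E(G)$ such that (i) every graph isomorphism $V(G)\to V(H)$ induces an isomorphism $\mathcal{M}(G)\to\mathcal{M}(H)$, and (ii) for every subgraph $H$ of $G$, $\mathcal{M}(H)$ is the restriction of $\mathcal{M}(G)$ to $E(H)$. $\mathcal{M}$ is unbounded if the rank of $\mathcal{M}(K_n)$ is unbounded in $n$. $G$ is $\mathcal{M}$-reconstructible if for every graph $H$ and every matroid isomorphism $\psi:E(G)\to E(H)$ between $\mathcal{M}(G)$ and $\mathcal{M}(H)$ there is a graph isomorphism $\varphi:V(G)\to V(H)$ with $\psi(uv)=\varphi(u)\varphi(v)$ for all $uv\in E(G)$. A bridge of a matroid is an element contained in no circuit. *)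

theory Defs
  imports Main
begin

text \<open>Graphs: finite simple graphs without isolated vertices, on vertex type nat,
represented by their edge set (each edge a 2-element vertex set).
The vertex set is the union of the edges.\<close>

type_synonym graph = "nat set set"

definition is_graph :: "graph \<Rightarrow> bool" where
  "is_graph G \<longleftrightarrow> finite G \<and> (\<forall>e\<in>G. card e = 2)"

definition verts :: "graph \<Rightarrow> nat set" where
  "verts G = \<Union>G"

definition graph_iso :: "(nat \<Rightarrow> nat) \<Rightarrow> graph \<Rightarrow> graph \<Rightarrow> bool" where
  "graph_iso \<phi> G H \<longleftrightarrow> bij_betw \<phi> (verts G) (verts H) \<and>
     (\<forall>u\<in>verts G. \<forall>v\<in>verts G. {u, v} \<in> G \<longleftrightarrow> {\<phi> u, \<phi> v} \<in> H)"

definition matroid :: "'a set \<Rightarrow> 'a set set \<Rightarrow> bool" where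
  "matroid E Ind \<longleftrightarrow> finite E \<and> (\<forall>I\<in>Ind. I \<subseteq> E) \<and> {} \<in> Ind \<and>
     (\<forall>I J. J \<in> Ind \<longrightarrow> I \<subseteq> J \<longrightarrow> I \<in> Ind) \<and>
     (\<forall>I J. I \<in> Ind \<longrightarrow> J \<in> Ind \<longrightarrow> card I < card J \<longrightarrow> (\<exists>x\<in>J - I. insert x I \<in> Ind))"

definition matroid_iso :: "('a \<Rightarrow> 'b) \<Rightarrow> 'a set \<Rightarrow> 'a set set \<Rightarrow> 'b set \<Rightarrow> 'b set set \<Rightarrow> bool" where
  "matroid_iso \<psi> E1 Ind1 E2 Ind2 \<longleftrightarrow> bij_betw \<psi> E1 E2 \<and>
     (\<forall>I. I \<subseteq> E1 \<longrightarrow> (I \<in> Ind1 \<longleftrightarrow> \<psi> ` I \<in> Ind2))"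

definition circuit :: "'a set \<Rightarrow> 'a set set \<Rightarrow> 'a set \<Rightarrow> bool" where
  "circuit E Ind C \<longleftrightarrow> C \<subseteq> E \<and> C \<notin> Ind \<and> (\<forall>D. D \<subset> C \<longrightarrow> D \<in> Ind)"

definition bridge :: "'a set \<Rightarrow> 'a set set \<Rightarrow> 'a \<Rightarrow> bool" where
  "bridge E Ind e \<longleftrightarrow> e \<in> E \<and> \<not> (\<exists>C. circuit E Ind C \<and> e \<in> C)"

definition bridgeless :: "'a set \<Rightarrow> 'a set set \<Rightarrow> bool" where
  "bridgeless E Ind \<longleftrightarrow> (\<forall>e\<in>E. \<not> bridge E Ind e)"

definition graph_matroid_family :: "(graph \<Rightarrow> nat set set set) \<Rightarrow> bool" where
  "graph_matroid_family M \<longleftrightarrow>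
     (\<forall>G. is_graph G \<longrightarrow> matroid G (M G)) \<and>
     (\<forall>G H \<phi>. is_graph G \<longrightarrow> is_graph H \<longrightarrow> graph_iso \<phi> G H \<longrightarrow>
        matroid_iso (\<lambda>e. \<phi> ` e) G (M G) H (M H)) \<and>
     (\<forall>G H. is_graph G \<longrightarrow> H \<subseteq> G \<longrightarrow> M H = {I \<in> M G. I \<subseteq> H})"

definition complete_graph :: "nat \<Rightarrow> graph" where
  "complete_graph n = {{i, j} | i j. i < j \<and> j < n}"

definition matroid_rank :: "'a set set \<Rightarrow> nat" where
  "matroid_rank Ind = Max (card ` Ind)"

definition unbounded_family :: "(graph \<Rightarrow> nat set set set) \<Rightarrow> bool" where
  "unbounded_family M \<longleftrightarrow> (\<forall>k. \<exists>n. matroid_rank (M (complete_graph n)) \<ge> k)"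

definition reconstructible :: "(graph \<Rightarrow> nat set set set) \<Rightarrow> graph \<Rightarrow> bool" where
  "reconstructible M G \<longleftrightarrow>
     (\<forall>H \<psi>. is_graph H \<longrightarrow> matroid_iso \<psi> G (M G) H (M H) \<longrightarrow>
        (\<exists>\<phi>. graph_iso \<phi> G H \<and> (\<forall>u v. {u, v} \<in> G \<longrightarrow> \<psi> {u, v} = {\<phi> u, \<phi> v})))"

end

theory Submission
  imports Defs "HOL-Combinatorics.Transposition"
begin

text \<open>Suppose the edge e of G is a bridge, i.e.\ a coloop of \<open>\<M>(G)\<close>, and let G' = G - e.
Because \<open>\<M>\<close> is unbounded, some edge f outside G' raises the rank of G' and is therefore a coloop
of \<open>\<M>(G' + f)\<close>; moreover f can be chosen either vertex-disjoint from G or meeting G'.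
Exchanging the coloops e and f is then an isomorphism \<open>\<M>(G) \<cong> \<M>(G' + f)\<close> fixing G',
so reconstructibility yields a vertex bijection fixing every edge of G' and sending e to f.
Such a bijection preserves whether an edge meets G', which fails for the suitable choice of f.
G' must be nonempty for the second choice, hence the hypothesis of two edges.\<close>

subsection \<open>Matroids\<close>

lemma matroid_indep_subset: "matroid E Ind \<Longrightarrow> I \<in> Ind \<Longrightarrow> I \<subseteq> E"
  unfolding matroid_def by blast

lemma matroid_indep_mono: "matroid E Ind \<Longrightarrow> J \<in> Ind \<Longrightarrow> I \<subseteq> J \<Longrightarrow> I \<in> Ind"
  unfolding matroid_def by blast

lemma matroid_empty_indep: "matroid E Ind \<Longrightarrow> {} \<in> Ind"
  unfolding matroid_def by blast

lemma matroid_augment: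
  "matroid E Ind \<Longrightarrow> I \<in> Ind \<Longrightarrow> J \<in> Ind \<Longrightarrow> card I < card J \<Longrightarrow> \<exists>x\<in>J - I. insert x I \<in> Ind"
  unfolding matroid_def by blast

lemma matroid_finite_indep: "matroid E Ind \<Longrightarrow> I \<in> Ind \<Longrightarrow> finite I"
  unfolding matroid_def by (meson finite_subset)

lemma matroid_finite_Ind: "matroid E Ind \<Longrightarrow> finite Ind"
  unfolding matroid_def by (meson Pow_iff finite_Pow_iff finite_subset subsetI)

definition max_card_indep :: "'a set set \<Rightarrow> 'a set \<Rightarrow> bool" where
  "max_card_indep Ind B \<longleftrightarrow> B \<in> Ind \<and> (\<forall>I\<in>Ind. card I \<le> card B)"

lemma matroid_max_card_indep:
  assumes "matroid E Ind" "max_card_indep Ind B"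
  shows "B \<in> Ind" "B \<subseteq> E" "finite B"
  using assms(2) matroid_indep_subset[OF assms(1)] matroid_finite_indep[OF assms(1)]
  unfolding max_card_indep_def by blast+

lemma ex_max_card_indep:
  assumes "finite Ind" "X \<in> Ind"
  shows "\<exists>B. max_card_indep Ind B"
proof -
  have "Max (card ` Ind) \<in> card ` Ind"
    using assms by (intro Max_in) auto
  then obtain B where "B \<in> Ind" "card B = Max (card ` Ind)"
    by auto
  then show ?thesis
    using assms(1) unfolding max_card_indep_def by auto
qed

definition coloop :: "'a set set \<Rightarrow> 'a \<Rightarrow> bool" where
  "coloop Ind e \<longleftrightarrow> (\<forall>J\<in>Ind. insert e J \<in> Ind)"

text \<open>A minimal dependent subset of \<open>J + e\<close> would be a circuit through e.\<close>

lemma bridge_imp_coloop: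
  assumes mat: "matroid E Ind" and br: "bridge E Ind e"
  shows "coloop Ind e"
  unfolding coloop_def
proof (intro ballI, rule ccontr)
  fix J assume J: "J \<in> Ind" and dep: "insert e J \<notin> Ind"
  define Dep where "Dep = (\<lambda>C. C \<subseteq> insert e J \<and> C \<notin> Ind)"
  obtain C where C: "C \<subseteq> insert e J" "C \<notin> Ind" and C_min: "\<And>D. Dep D \<Longrightarrow> card C \<le> card D"
    using ex_has_least_nat[of Dep "insert e J" card] dep unfolding Dep_def by blast
  have eJ_sub: "insert e J \<subseteq> E"
    using br matroid_indep_subset[OF mat J] unfolding bridge_def by blast
  have finite_C: "finite C"
    using C(1) matroid_finite_indep[OF mat J] finite_subset by blast
  have "D \<in> Ind" if "D \<subset> C" for D
  proof (rule ccontr)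
    assume "D \<notin> Ind"
    then have "card C \<le> card D"
      using C_min that C(1) unfolding Dep_def by blast
    then show False
      using psubset_card_mono[OF finite_C that] by simp
  qed
  then have "circuit E Ind C"
    using C eJ_sub unfolding circuit_def by blast
  moreover have "e \<in> C"
  proof (rule ccontr)
    assume "e \<notin> C"
    then have "C \<subseteq> J"
      using C(1) by blast
    then show False
      using C(2) matroid_indep_mono[OF mat J] by blast
  qed
  ultimately show False
    using br unfolding bridge_def by blast
qed

text \<open>Extend J to a largest independent \<open>B' \<subseteq> E\<close>; as \<open>|B'| \<le> |B| < |B + f|\<close>,
augmenting B' from \<open>B + f\<close> can only add f.\<close>

lemma coloop_if_extends_max_card_indep:
  assumes mat: "matroid (insert f E) Ind" and f: "f \<notin> E"
    and B: "max_card_indep {I \<in> Ind. I \<subseteq> E} B" and fB: "insert f B \<in> Ind"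
  shows "coloop Ind f"
  unfolding coloop_def
proof
  fix J assume "J \<in> Ind"
  define J' where "J' = J - {f}"
  have J': "J' \<in> Ind" "J' \<subseteq> E"
    using matroid_indep_mono[OF mat \<open>J \<in> Ind\<close>] matroid_indep_subset[OF mat \<open>J \<in> Ind\<close>]
    unfolding J'_def by auto
  define Ext where "Ext = {I \<in> Ind. J' \<subseteq> I \<and> I \<subseteq> E}"
  obtain B' where B': "max_card_indep Ext B'"
    using ex_max_card_indep[of Ext J'] matroid_finite_Ind[OF mat] J' unfolding Ext_def by auto
  have B'_props: "B' \<in> Ind" "J' \<subseteq> B'" "B' \<subseteq> E" "finite B'"
    using B' matroid_finite_indep[OF mat] unfolding max_card_indep_def Ext_def by auto
  have "card B' \<le> card B"
    using B B'_props unfolding max_card_indep_def by auto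
  also have "card B < card (insert f B)"
  proof -
    have "finite B" "f \<notin> B"
      using B f matroid_finite_indep[OF mat] unfolding max_card_indep_def by auto
    then show ?thesis by simp
  qed
  finally obtain y where y: "y \<in> insert f B - B'" "insert y B' \<in> Ind"
    using matroid_augment[OF mat B'_props(1) fB] by blast
  have "y = f"
  proof (rule ccontr)
    assume "y \<noteq> f"
    then have "insert y B' \<in> Ext"
      using y B B'_props unfolding Ext_def max_card_indep_def by auto
    then show False
      using B' y B'_props(4) unfolding max_card_indep_def by auto
  qed
  then have "insert f J \<subseteq> insert y B'"
    using B'_props(2) unfolding J'_def by blast
  then show "insert f J \<in> Ind"
    using matroid_indep_mono[OF mat y(2)] by blast
qed

lemma transpose_coloops_matroid_iso:
  assumes mat1: "matroid (insert e E) Ind1" and mat2: "matroid (insert f E) Ind2"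
    and "e \<notin> E" "f \<notin> E"
    and same: "\<And>I. I \<subseteq> E \<Longrightarrow> I \<in> Ind1 \<longleftrightarrow> I \<in> Ind2"
    and e: "coloop Ind1 e" and f: "coloop Ind2 f"
  shows "matroid_iso (transpose e f) (insert e E) Ind1 (insert f E) Ind2"
proof -
  have fix_E: "transpose e f ` J = J" if "J \<subseteq> E" for J
    using that \<open>e \<notin> E\<close> \<open>f \<notin> E\<close> by (intro transpose_image_eq) blast
  have "transpose e f ` insert e E = insert f E"
    using fix_E[of E] by simp
  then have bij: "bij_betw (transpose e f) (insert e E) (insert f E)"
    by (rule bij_betw_imageI[OF inj_on_transpose])
  have "I \<in> Ind1 \<longleftrightarrow> transpose e f ` I \<in> Ind2" if I: "I \<subseteq> insert e E" for I
  proof -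
    define J where "J = I - {e}"
    have J: "J \<subseteq> E" "transpose e f ` J = J"
      using I fix_E[of J] unfolding J_def by blast+
    have del_e: "insert e J \<in> Ind1 \<longleftrightarrow> J \<in> Ind1"
      using e matroid_indep_mono[OF mat1] unfolding coloop_def by blast
    have del_f: "insert f J \<in> Ind2 \<longleftrightarrow> J \<in> Ind2"
      using f matroid_indep_mono[OF mat2] unfolding coloop_def by blast
    show ?thesis
    proof (cases "e \<in> I")
      case True
      then have "I = insert e J"
        unfolding J_def by blast
      moreover have "transpose e f ` insert e J = insert f J"
        using J(2) by simp
      ultimately show ?thesis
        using del_e del_f same[OF J(1)] by simp
    next
      case False
      then have "I = J"
        unfolding J_def by blast
      then show ?thesis
        using J same by simp
    qed
  qed
  then show ?thesis
    using bij unfolding matroid_iso_def by blast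
qed

subsection \<open>Graph matroid families\<close>

lemma graph_matroid_family_matroid:
  "graph_matroid_family M \<Longrightarrow> is_graph G \<Longrightarrow> matroid G (M G)"
  unfolding graph_matroid_family_def by blast

lemma graph_matroid_family_iso:
  "graph_matroid_family M \<Longrightarrow> is_graph G \<Longrightarrow> is_graph H \<Longrightarrow> graph_iso \<phi> G H \<Longrightarrow>
    matroid_iso (\<lambda>e. \<phi> ` e) G (M G) H (M H)"
  unfolding graph_matroid_family_def by blast

lemma graph_matroid_family_restrict:
  "graph_matroid_family M \<Longrightarrow> is_graph G \<Longrightarrow> H \<subseteq> G \<Longrightarrow> M H = {I \<in> M G. I \<subseteq> H}"
  unfolding graph_matroid_family_def by blast

lemma is_graph_subset: "is_graph G \<Longrightarrow> H \<subseteq> G \<Longrightarrow> is_graph H"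
  unfolding is_graph_def by (meson finite_subset subsetD)

lemma is_graph_Un: "is_graph G \<Longrightarrow> is_graph H \<Longrightarrow> is_graph (G \<union> H)"
  unfolding is_graph_def by auto

lemma is_graph_insert: "is_graph G \<Longrightarrow> card f = 2 \<Longrightarrow> is_graph (insert f G)"
  unfolding is_graph_def by auto

lemma finite_verts: "is_graph G \<Longrightarrow> finite (verts G)"
  unfolding is_graph_def verts_def by (metis card.infinite finite_Union zero_neq_numeral)

lemma is_graph_complete_graph: "is_graph (complete_graph n)"
proof -
  have "complete_graph n \<subseteq> Pow {..<n}"
    unfolding complete_graph_def by auto
  then show ?thesis
    unfolding is_graph_def complete_graph_def by (auto intro: finite_subset)
qed

definition graph_image :: "(nat \<Rightarrow> nat) \<Rightarrow> graph \<Rightarrow> graph" where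
  "graph_image \<phi> G = (\<lambda>e. \<phi> ` e) ` G"

lemma inj_image_edge: "inj \<phi> \<Longrightarrow> inj (\<lambda>e. \<phi> ` e)"
  unfolding inj_on_def using inj_image_eq_iff by blast

lemma card_graph_image: "inj \<phi> \<Longrightarrow> card (graph_image \<phi> G) = card G"
  unfolding graph_image_def by (metis card_image inj_image_edge inj_on_subset subset_UNIV)

lemma is_graph_graph_image: "inj \<phi> \<Longrightarrow> is_graph G \<Longrightarrow> is_graph (graph_image \<phi> G)"
  unfolding is_graph_def graph_image_def by (auto simp: card_image inj_on_subset)

lemma graph_iso_graph_image: "inj \<phi> \<Longrightarrow> graph_iso \<phi> G (graph_image \<phi> G)"
proof -
  assume inj: "inj \<phi>"
  have "verts (graph_image \<phi> G) = \<phi> ` verts G"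
    unfolding verts_def graph_image_def by (simp add: image_Union)
  then have "bij_betw \<phi> (verts G) (verts (graph_image \<phi> G))"
    using inj_on_subset[OF inj subset_UNIV] by (simp add: bij_betw_def)
  moreover have "{u, v} \<in> G \<longleftrightarrow> {\<phi> u, \<phi> v} \<in> graph_image \<phi> G" for u v
    using inj_image_mem_iff[OF inj_image_edge[OF inj], of "{u, v}" G]
    unfolding graph_image_def by simp
  ultimately show ?thesis
    unfolding graph_iso_def by blast
qed

lemma graph_image_self_indep:
  assumes gm: "graph_matroid_family M" and "inj \<phi>" "is_graph G" "G \<in> M G"
  shows "graph_image \<phi> G \<in> M (graph_image \<phi> G)"
proof -
  have "matroid_iso (\<lambda>e. \<phi> ` e) G (M G) (graph_image \<phi> G) (M (graph_image \<phi> G))"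
    using assms by (intro graph_matroid_family_iso is_graph_graph_image graph_iso_graph_image)
  then have "G \<in> M G \<longleftrightarrow> (\<lambda>e. \<phi> ` e) ` G \<in> M (graph_image \<phi> G)"
    unfolding matroid_iso_def by blast
  then show ?thesis
    using \<open>G \<in> M G\<close> unfolding graph_image_def by simp
qed

subsection \<open>Edges raising the rank\<close>

lemma unbounded_family_large_indep_graph:
  assumes gm: "graph_matroid_family M" and "unbounded_family M"
  obtains I where "is_graph I" "I \<in> M I" "k \<le> card I"
proof -
  obtain n where rank: "k \<le> matroid_rank (M (complete_graph n))"
    using assms(2) unfolding unbounded_family_def by blast
  define K where "K = complete_graph n"
  have K: "is_graph K" "matroid K (M K)"
    unfolding K_def using is_graph_complete_graph graph_matroid_family_matroid[OF gm] by auto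
  obtain I where I: "max_card_indep (M K) I"
    using ex_max_card_indep matroid_finite_Ind[OF K(2)] matroid_empty_indep[OF K(2)] by blast
  have "matroid_rank (M K) = card I"
    using I matroid_finite_Ind[OF K(2)] unfolding max_card_indep_def matroid_rank_def
    by (intro Max_eqI) auto
  moreover have "I \<in> M K" "I \<subseteq> K"
    using matroid_max_card_indep[OF K(2) I] by blast+
  moreover have "I \<in> M I"
    using graph_matroid_family_restrict[OF gm K(1) \<open>I \<subseteq> K\<close>] \<open>I \<in> M K\<close> by blast
  ultimately show thesis
    using that[OF is_graph_subset[OF K(1)]] rank unfolding K_def by simp
qed

lemma unbounded_family_indep_graph_avoiding:
  assumes gm: "graph_matroid_family M" and unb: "unbounded_family M" and "finite V"
  obtains I where "is_graph I" "I \<in> M I" "k \<le> card I" "\<forall>g\<in>I. g \<inter> V = {}"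
proof -
  obtain I where I: "is_graph I" "I \<in> M I" "k \<le> card I"
    using unbounded_family_large_indep_graph[OF gm unb] .
  obtain m where m: "\<forall>v\<in>V. v < m"
    using \<open>finite V\<close> finite_nat_set_iff_bounded by blast
  define shift where "shift = (\<lambda>i::nat. i + m)"
  have inj: "inj shift"
    unfolding shift_def by (simp add: inj_on_def)
  show thesis
  proof (rule that)
    show "is_graph (graph_image shift I)"
      using is_graph_graph_image[OF inj I(1)] .
    show "graph_image shift I \<in> M (graph_image shift I)"
      using graph_image_self_indep[OF gm inj I(1,2)] .
    show "k \<le> card (graph_image shift I)"
      using card_graph_image[OF inj] I(3) by simp
    show "\<forall>g\<in>graph_image shift I. g \<inter> V = {}"
      using m unfolding graph_image_def shift_def by fastforce
  qed
qed

lemma rank_raising_edge_from_indep_graph: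
  assumes gm: "graph_matroid_family M" and G': "is_graph G'" and B: "max_card_indep (M G') B"
    and K: "is_graph K" "K \<in> M K" "card B < card K"
  obtains f where "f \<in> K" "f \<notin> G'" "insert f B \<in> M (insert f G')"
proof -
  define U where "U = G' \<union> K"
  have U: "is_graph U"
    unfolding U_def using is_graph_Un[OF G' K(1)] .
  have restrict: "M H = {I \<in> M U. I \<subseteq> H}" if "H \<subseteq> U" for H
    using graph_matroid_family_restrict[OF gm U that] .
  note B_G' = matroid_max_card_indep[OF graph_matroid_family_matroid[OF gm G'] B]
  have "B \<in> M U" "K \<in> M U"
    using restrict[of G'] restrict[of K] B_G'(1) K(2) unfolding U_def by blast+
  then obtain f where f: "f \<in> K" "f \<notin> B" "insert f B \<in> M U"
    using matroid_augment[OF graph_matroid_family_matroid[OF gm U]] K(3) by blast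
  have "f \<notin> G'"
  proof
    assume "f \<in> G'"
    then have "insert f B \<in> M G'"
      using restrict[of G'] f(3) B_G'(2) unfolding U_def by blast
    moreover have "card (insert f B) = Suc (card B)"
      using f(2) B_G'(3) by simp
    ultimately show False
      using B unfolding max_card_indep_def by fastforce
  qed
  moreover have "insert f B \<in> M (insert f G')"
    using restrict[of "insert f G'"] f(1,3) B_G'(2) unfolding U_def by blast
  ultimately show thesis
    using that f(1) by blast
qed

lemma rank_raising_edge_avoiding:
  assumes gm: "graph_matroid_family M" and unb: "unbounded_family M"
    and G': "is_graph G'" and B: "max_card_indep (M G') B" and "finite V"
  obtains f where "card f = 2" "f \<notin> G'" "f \<inter> V = {}" "insert f B \<in> M (insert f G')"
proof -
  obtain K where K: "is_graph K" "K \<in> M K" "Suc (card B) \<le> card K" "\<forall>g\<in>K. g \<inter> V = {}"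
    using unbounded_family_indep_graph_avoiding[OF gm unb \<open>finite V\<close>] .
  obtain f where "f \<in> K" "f \<notin> G'" "insert f B \<in> M (insert f G')"
    using rank_raising_edge_from_indep_graph[OF gm G' B K(1,2)] K(3) by auto
  then show thesis
    using that K(1,4) unfolding is_graph_def by blast
qed

lemma graph_image_transpose_meets:
  assumes "is_graph A" "x \<in> V" "b \<notin> V" "\<forall>h\<in>A. b \<in> h \<or> h \<subseteq> V"
  shows "\<forall>h\<in>graph_image (transpose b x) A. h \<inter> V \<noteq> {}"
proof
  fix h' assume "h' \<in> graph_image (transpose b x) A"
  then obtain h where h: "h \<in> A" "h' = transpose b x ` h"
    unfolding graph_image_def by blast
  show "h' \<inter> V \<noteq> {}"
  proof (cases "b \<in> h")
    case True
    then have "transpose b x b \<in> h'"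
      using h(2) by blast
    then show ?thesis
      using assms(2) by auto
  next
    case False
    have "card h = 2"
      using assms(1) h(1) unfolding is_graph_def by blast
    then obtain r where r: "r \<in> h" "r \<noteq> x"
      by (metis card_2_iff insertI1 insert_commute)
    have "r \<in> V"
      using False assms(4) h(1) r(1) by blast
    then have "r \<noteq> b"
      using assms(3) by blast
    then have "transpose b x r = r"
      using r(2) by (rule transpose_apply_other)
    then show ?thesis
      using h(2) r(1) \<open>r \<in> V\<close> by (metis IntI empty_iff image_eqI)
  qed
qed

text \<open>Relabelling one end of an edge avoiding G' to a vertex of G' gives an independent graph
of size |B| + 1 all of whose edges meet G'.\<close>

lemma rank_raising_edge_meeting:
  assumes gm: "graph_matroid_family M" and unb: "unbounded_family M"
    and G': "is_graph G'" and B: "max_card_indep (M G') B" and x: "x \<in> verts G'"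
  obtains f where "card f = 2" "f \<notin> G'" "f \<inter> verts G' \<noteq> {}" "insert f B \<in> M (insert f G')"
proof -
  obtain f0 where f0: "card f0 = 2" "f0 \<notin> G'" "f0 \<inter> verts G' = {}"
      "insert f0 B \<in> M (insert f0 G')"
    using rank_raising_edge_avoiding[OF gm unb G' B finite_verts[OF G']] .
  have "f0 \<noteq> {}"
    using f0(1) by auto
  then obtain b where b: "b \<in> f0" "b \<notin> verts G'"
    using f0(3) by blast
  note B_G' = matroid_max_card_indep[OF graph_matroid_family_matroid[OF gm G'] B]
  have f0B_graph: "is_graph (insert f0 B)"
    using is_graph_insert[OF is_graph_subset[OF G' B_G'(2)] f0(1)] .
  have f0B_indep: "insert f0 B \<in> M (insert f0 B)"
    using graph_matroid_family_restrict[OF gm is_graph_insert[OF G' f0(1)], of "insert f0 B"]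
      f0(4) B_G'(2) by blast
  have "f0 \<notin> B"
    using f0(2) B_G'(2) by blast
  then have f0B_card: "card (insert f0 B) = Suc (card B)"
    using B_G'(3) by simp
  define K where "K = graph_image (transpose b x) (insert f0 B)"
  have K: "is_graph K" "K \<in> M K" "card B < card K"
    unfolding K_def
    using is_graph_graph_image[OF inj_transpose f0B_graph]
      graph_image_self_indep[OF gm inj_transpose f0B_graph f0B_indep]
      card_graph_image[OF inj_transpose] f0B_card by simp_all
  have "\<forall>h\<in>insert f0 B. b \<in> h \<or> h \<subseteq> verts G'"
    using b(1) B_G'(2) unfolding verts_def by blast
  then have meets: "\<forall>h\<in>K. h \<inter> verts G' \<noteq> {}"
    unfolding K_def by (rule graph_image_transpose_meets[OF f0B_graph x b(2)])
  obtain f where f: "f \<in> K" "f \<notin> G'" "insert f B \<in> M (insert f G')"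
    using rank_raising_edge_from_indep_graph[OF gm G' B K] .
  have "card f = 2"
    using K(1) f(1) unfolding is_graph_def by blast
  moreover have "f \<inter> verts G' \<noteq> {}"
    using meets f(1) by blast
  ultimately show thesis
    using that f(2,3) by blast
qed

subsection \<open>Exchanging coloops\<close>

lemma bridge_rank_raising_edge_matroid_iso:
  assumes gm: "graph_matroid_family M" and G: "is_graph G"
    and br: "bridge G (M G) e" and B: "max_card_indep (M (G - {e})) B"
    and f: "card f = 2" "f \<notin> G" and fB: "insert f B \<in> M (insert f (G - {e}))"
  shows "matroid_iso (transpose e f) G (M G) (insert f (G - {e})) (M (insert f (G - {e})))"
proof -
  define G' where "G' = G - {e}"
  define H where "H = insert f G'"
  have e: "G = insert e G'" "e \<notin> G'" "f \<notin> G'"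
    using br f(2) unfolding bridge_def G'_def by auto
  have H: "is_graph H"
    using is_graph_subset[OF G] is_graph_insert f(1) unfolding G'_def H_def by auto
  have mat_G: "matroid (insert e G') (M G)" and mat_H: "matroid (insert f G') (M H)"
    using graph_matroid_family_matroid[OF gm] G H e(1) unfolding H_def by auto
  have restrict_G: "M G' = {I \<in> M G. I \<subseteq> G'}" and restrict_H: "M G' = {I \<in> M H. I \<subseteq> G'}"
    using graph_matroid_family_restrict[OF gm G, of G'] graph_matroid_family_restrict[OF gm H, of G']
    unfolding G'_def H_def by blast+
  have "coloop (M G) e"
    using bridge_imp_coloop[OF graph_matroid_family_matroid[OF gm G] br] .
  moreover have "coloop (M H) f"
    using coloop_if_extends_max_card_indep[OF mat_H e(3)] B fB restrict_H
    unfolding G'_def H_def by simp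
  ultimately have "matroid_iso (transpose e f) G (M G) H (M H)"
    using transpose_coloops_matroid_iso[OF mat_G mat_H e(2,3)] restrict_G restrict_H e(1)
    unfolding H_def by blast
  then show ?thesis
    unfolding H_def G'_def .
qed

lemma reconstructible_coloop_exchange:
  assumes gm: "graph_matroid_family M" and G: "is_graph G" and rec: "reconstructible M G"
    and br: "bridge G (M G) e" and B: "max_card_indep (M (G - {e})) B"
    and f: "card f = 2" "f \<notin> G" and fB: "insert f B \<in> M (insert f (G - {e}))"
  obtains \<phi> where "inj_on \<phi> (verts G)" "\<forall>g\<in>G - {e}. \<phi> ` g = g" "\<phi> ` e = f"
proof -
  have H: "is_graph (insert f (G - {e}))"
    using is_graph_insert[OF is_graph_subset[OF G] f(1)] by blast
  obtain \<phi> where \<phi>: "graph_iso \<phi> G (insert f (G - {e}))"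
      "\<forall>u v. {u, v} \<in> G \<longrightarrow> transpose e f {u, v} = {\<phi> u, \<phi> v}"
    using rec H bridge_rank_raising_edge_matroid_iso[OF gm G br B f fB]
    unfolding reconstructible_def by blast
  have image: "\<phi> ` g = transpose e f g" if "g \<in> G" for g
  proof -
    have "card g = 2"
      using G that unfolding is_graph_def by blast
    then obtain u v where "g = {u, v}"
      by (auto simp: card_2_iff)
    then show ?thesis
      using \<phi>(2) that by simp
  qed
  show thesis
  proof (rule that)
    show "inj_on \<phi> (verts G)"
      using \<phi>(1) unfolding graph_iso_def bij_betw_def by blast
    show "\<forall>g\<in>G - {e}. \<phi> ` g = g"
    proof
      fix g assume g: "g \<in> G - {e}"
      then have "g \<noteq> e" "g \<noteq> f"
        using f(2) by blast+
      then show "\<phi> ` g = g"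
        using image g by simp
    qed
    show "\<phi> ` e = f"
      using image br unfolding bridge_def by simp
  qed
qed

lemma inj_on_fixing_edges_disjoint_iff:
  assumes inj: "inj_on \<phi> (e \<union> verts G')" and fixed: "\<forall>g\<in>G'. \<phi> ` g = g"
  shows "\<phi> ` e \<inter> verts G' = {} \<longleftrightarrow> e \<inter> verts G' = {}"
proof
  assume "\<phi> ` e \<inter> verts G' = {}"
  show "e \<inter> verts G' = {}"
  proof (rule ccontr)
    assume "e \<inter> verts G' \<noteq> {}"
    then obtain w g where "w \<in> e" "w \<in> g" "g \<in> G'"
      unfolding verts_def by blast
    then have "\<phi> w \<in> \<phi> ` e \<inter> verts G'"
      using fixed unfolding verts_def by blast
    then show False
      using \<open>\<phi> ` e \<inter> verts G' = {}\<close> by blast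
  qed
next
  assume disjoint: "e \<inter> verts G' = {}"
  show "\<phi> ` e \<inter> verts G' = {}"
  proof (rule ccontr)
    assume "\<phi> ` e \<inter> verts G' \<noteq> {}"
    then obtain w g where w: "w \<in> e" "\<phi> w \<in> g" "g \<in> G'"
      unfolding verts_def by blast
    then obtain w' where w': "w' \<in> g" "\<phi> w' = \<phi> w"
      using fixed by (metis imageE)
    have "w' \<in> verts G'"
      using w' w(3) unfolding verts_def by blast
    then have "w = w'"
      using inj w(1) w'(2) by (auto dest: inj_onD)
    then show False
      using disjoint w(1) \<open>w' \<in> verts G'\<close> by blast
  qed
qed

lemma reconstructible_exchange_disjoint_iff:
  assumes gm: "graph_matroid_family M" and G: "is_graph G" and rec: "reconstructible M G"
    and br: "bridge G (M G) e" and B: "max_card_indep (M (G - {e})) B"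
    and f: "card f = 2" "f \<notin> G" "insert f B \<in> M (insert f (G - {e}))"
  shows "e \<inter> verts (G - {e}) = {} \<longleftrightarrow> f \<inter> verts (G - {e}) = {}"
proof -
  obtain \<phi> where \<phi>: "inj_on \<phi> (verts G)" "\<forall>g\<in>G - {e}. \<phi> ` g = g" "\<phi> ` e = f"
    using reconstructible_coloop_exchange[OF gm G rec br B f] .
  have "e \<union> verts (G - {e}) \<subseteq> verts G"
    using br unfolding bridge_def verts_def by blast
  then have "inj_on \<phi> (e \<union> verts (G - {e}))"
    using inj_on_subset[OF \<phi>(1)] by blast
  then show ?thesis
    using inj_on_fixing_edges_disjoint_iff[OF _ \<phi>(2), of e] \<phi>(3) by simp
qed

lemma verts_Diff_singleton_nonempty:
  assumes "is_graph G" "e \<in> G" "2 \<le> card G"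
  shows "verts (G - {e}) \<noteq> {}"
proof -
  have "card (G - {e}) = card G - 1"
    using assms(2) by (simp add: card_Diff_singleton)
  then have "card (G - {e}) \<noteq> 0"
    using assms(3) by linarith
  then obtain g where "g \<in> G - {e}"
    by (metis card.empty ex_in_conv)
  moreover have "g \<noteq> {}"
    using \<open>g \<in> G - {e}\<close> assms(1) unfolding is_graph_def by fastforce
  ultimately show ?thesis
    unfolding verts_def by blast
qed

theorem lemma3p1:
  assumes "graph_matroid_family M"
    and "unbounded_family M"
    and "is_graph G"
    and "reconstructible M G"
    and "card G \<ge> 2"
  shows "bridgeless G (M G)"
proof (rule ccontr)
  assume "\<not> bridgeless G (M G)"
  then obtain e where br: "bridge G (M G) e" and "e \<in> G"
    unfolding bridgeless_def bridge_def by blast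
  define G' where "G' = G - {e}"
  have G': "is_graph G'" "verts G' \<subseteq> verts G"
    using is_graph_subset[OF assms(3)] unfolding G'_def verts_def by auto
  have mat_G': "matroid G' (M G')"
    using graph_matroid_family_matroid[OF assms(1) G'(1)] .
  obtain B where B: "max_card_indep (M G') B"
    using ex_max_card_indep[OF matroid_finite_Ind[OF mat_G'] matroid_empty_indep[OF mat_G']] by blast
  note exchange = reconstructible_exchange_disjoint_iff[OF assms(1,3,4) br B[unfolded G'_def]]
  show False
  proof (cases "e \<inter> verts G' = {}")
    case True
    obtain x where "x \<in> verts G'"
      using verts_Diff_singleton_nonempty[OF assms(3) \<open>e \<in> G\<close> assms(5)] unfolding G'_def by blast
    then obtain f where "card f = 2" "f \<notin> G'" "f \<inter> verts G' \<noteq> {}" "insert f B \<in> M (insert f G')"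
      using rank_raising_edge_meeting[OF assms(1,2) G'(1) B] by blast
    then show False
      using exchange True unfolding G'_def by blast
  next
    case False
    obtain f where f: "card f = 2" "f \<notin> G'" "f \<inter> verts G = {}" "insert f B \<in> M (insert f G')"
      using rank_raising_edge_avoiding[OF assms(1,2) G'(1) B finite_verts[OF assms(3)]] .
    then have "f \<notin> G"
      using card_2_iff[of f] unfolding verts_def by blast
    then show False
      using exchange f G'(2) False unfolding G'_def by blast
  qed
qed

end
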